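(* Let $(\sigma_n)_{n=1}^\infty$ be a strictly increasing sequence of positive integers with $\sigma_{n+1}\ge\sigma_n+n$ for all $n\ge1$ and such that $\lim_{n\to\infty}\frac{\sigma_n-\sigma_{n-1}}{n}=\beta\in[1,\infty]$ exists. Let \[G((\sigma_n)_{n=1}^\infty)=\{x\in J\colon a_{\sigma_n}(x),\ldots,a_{\sigma_n+n-1}(x)\ \text{is an arithmetic progression for all sufficiently large}\ n\}.\] Then \[\dim_{\rm H} G((\sigma_n)_{n=1}^\infty)\ge\begin{cases}\dfrac{\beta-1}{2\beta}&\text{if }\beta<\infty,\\ 1/2&\text{otherwise.}\end{cases}\]
   Context: Every irrational $x\in(0,1)$ has a regular continued fraction expansion with partial quotients $a_n(x)\in\mathbb N$, $n\ge1$. $J=\{x\in(0,1)\setminus\mathbb Q\colon a_n(x)<a_{n+1}(x)\text{ for every }n\ge1\}$. $\dim_{\rm H}$ denotes Hausdorff dimension in $[0,1]$. *)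

theory Defs
  imports "HOL-Analysis.Analysis"
begin

text \<open>Gauss map and regular continued fraction partial quotients (indexed from 1).\<close>
definition gauss_map :: "real \<Rightarrow> real" where
  "gauss_map x = frac (1 / x)"

definition cf_digit :: "nat \<Rightarrow> real \<Rightarrow> nat" where
  "cf_digit n x = nat \<lfloor>1 / ((gauss_map ^^ (n - 1)) x)\<rfloor>"

definition J_set :: "real set" where
  "J_set = {x. 0 < x \<and> x < 1 \<and> x \<notin> \<rat> \<and> (\<forall>n\<ge>1. cf_digit n x < cf_digit (Suc n) x)}"

definition hausdorff_pre :: "real \<Rightarrow> real \<Rightarrow> real set \<Rightarrow> ennreal" where
  "hausdorff_pre s \<delta> E = (INF U \<in> {U :: nat \<Rightarrow> real set. E \<subseteq> (\<Union>i. U i) \<and>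
        (\<forall>i. bounded (U i) \<and> diameter (U i) \<le> \<delta>)}.
        (\<Sum>i. ennreal (diameter (U i) powr s)))"

definition hausdorff_measure :: "real \<Rightarrow> real set \<Rightarrow> ennreal" where
  "hausdorff_measure s E = (SUP \<delta> \<in> {0<..}. hausdorff_pre s \<delta> E)"

definition hausdorff_dim :: "real set \<Rightarrow> real" where
  "hausdorff_dim E = Inf {s. 0 < s \<and> hausdorff_measure s E = 0}"

definition is_AP_block :: "real \<Rightarrow> nat \<Rightarrow> nat \<Rightarrow> bool" where
  "is_AP_block x k m = (\<exists>d::int. \<forall>j<m.
      int (cf_digit (k + j) x) = int (cf_digit k x) + int j * d)"

definition G_set :: "(nat \<Rightarrow> nat) \<Rightarrow> real set" where
  "G_set \<sigma> = {x \<in> J_set. \<exists>N. \<forall>n\<ge>N. is_AP_block x (\<sigma> n) n}"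

end

theory Submission
  imports Defs "HOL-Real_Asymp.Real_Asymp"
begin

(* Every y in [0,1) is coded into a point of G: the partial quotients at the positions
   sigma_m, ..., sigma_m + m - 1 form the progression 2^sigma_m, ..., 2^sigma_m + m - 1, and the
   partial quotient at every other (free) position k is 2^k plus the next k binary digits of y.
   Let W(n) be the sum of the free positions up to n, i.e. the number of binary digits of y read
   so far. If y and y' first disagree at the free position n, with coded digits differing by D,
   then |y - y'| <= 2 D / 2^W(n), while the coded points differ by at least D / 2^(n^2+3n+1).
   Since sigma_(m+1) - sigma_m >= gamma (m+1) eventually for every gamma < beta, the blocks up to n
   have total weight at most n^2/(2 gamma) + O(n^(3/2)), so W(n) >= (1/2 - 1/(2 gamma) - o(1)) n^2.
   Hence the coding map has an s-Hoelder inverse for every s < 1/2 - 1/(2 beta), which forces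
   positive s-dimensional Hausdorff measure of G. *)

section \<open>Continued fractions with prescribed partial quotients\<close>

lemma abs_inverse_add_diff:
  fixes c u v :: real
  assumes "0 < c + u" "0 < c + v"
  shows "\<bar>1 / (c + u) - 1 / (c + v)\<bar> = \<bar>u - v\<bar> / ((c + u) * (c + v))"
proof -
  have "1 / (c + u) - 1 / (c + v) = (v - u) / ((c + u) * (c + v))"
    using assms by (simp add: field_simps)
  then show ?thesis using assms by (simp add: abs_div abs_minus_commute abs_of_pos)
qed

lemma gauss_map_denominator_decrease:
  fixes x :: real and q :: nat
  assumes "0 < x" "x < 1" "0 < q" "x * q \<in> \<int>"
  obtains p :: nat where "0 < p" "p < q" "gauss_map x * p \<in> \<int>"
proof -
  obtain i :: int where i: "x * q = of_int i" using assms(4) by (elim Ints_cases) simp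
  have "0 < x * q" "x * q < q" using assms by simp_all
  define p where "p = nat i"
  have p: "x * q = p" using i \<open>0 < x * q\<close> by (simp add: p_def)
  have "0 < real p" "real p < real q" using \<open>0 < x * q\<close> \<open>x * q < q\<close> unfolding p .
  then have "0 < p" "p < q" by simp_all
  moreover have "gauss_map x * p = of_int (int q - \<lfloor>real q / p\<rfloor> * p)"
  proof -
    have "1 / x = real q / p" using p assms \<open>0 < p\<close> by (auto simp: field_simps)
    then have "gauss_map x * p = (real q / p - \<lfloor>real q / p\<rfloor>) * p"
      by (simp add: gauss_map_def frac_def)
    also have "\<dots> = of_int (int q - \<lfloor>real q / p\<rfloor> * p)"
      using \<open>0 < p\<close> by (simp add: algebra_simps)
    finally show ?thesis .
  qed
  then have "gauss_map x * p \<in> \<int>" by simp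
  ultimately show ?thesis using that by blast
qed

lemma irrational_if_gauss_orbit_in_unit_interval:
  fixes x :: real
  assumes orbit: "\<And>k. 0 < (gauss_map ^^ k) x \<and> (gauss_map ^^ k) x < 1"
  shows "x \<notin> \<rat>"
proof
  assume "x \<in> \<rat>"
  then obtain q :: nat where "0 < q" "x * q \<in> \<int>"
  proof (elim Rats_cases')
    fix i :: int and j :: int assume "x = i / j" "0 < j"
    then have "x * real (nat j) = of_int i" by simp
    then show ?thesis using that[of "nat j"] \<open>0 < j\<close> by simp
  qed
  have "\<exists>p::nat. 0 < p \<and> p + k \<le> q \<and> (gauss_map ^^ k) x * p \<in> \<int>" for k
  proof (induction k)
    case 0
    show ?case using \<open>0 < q\<close> \<open>x * q \<in> \<int>\<close> by auto
  next
    case (Suc k)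
    then obtain p :: nat where "0 < p" "p + k \<le> q" "(gauss_map ^^ k) x * p \<in> \<int>" by blast
    moreover obtain p' :: nat where "0 < p'" "p' < p" "gauss_map ((gauss_map ^^ k) x) * p' \<in> \<int>"
      using orbit[of k] \<open>0 < p\<close> \<open>(gauss_map ^^ k) x * p \<in> \<int>\<close>
      by (auto intro: gauss_map_denominator_decrease)
    ultimately show ?case using \<open>p + k \<le> q\<close> by (intro exI[of _ p']) auto
  qed
  from this[of q] show False by auto
qed

fun cf_approx :: "(nat \<Rightarrow> nat) \<Rightarrow> nat \<Rightarrow> nat \<Rightarrow> real" where
  "cf_approx a 0 r = 0"
| "cf_approx a (Suc n) r = 1 / (real (a (Suc r)) + cf_approx a n (Suc r))"

text \<open>\<^term>\<open>cf_approx a n r\<close> is \<open>[0; a (r+1), \<dots>, a (r+n)]\<close> and \<^term>\<open>cf_tail a r\<close> is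
  \<open>[0; a (r+1), a (r+2), \<dots>]\<close>.\<close>
definition cf_tail :: "(nat \<Rightarrow> nat) \<Rightarrow> nat \<Rightarrow> real" where
  "cf_tail a r = lim (\<lambda>n. cf_approx a n r)"

locale cf_large_digits =
  fixes a :: "nat \<Rightarrow> nat"
  assumes digit_ge_2: "\<And>k. 1 \<le> k \<Longrightarrow> 2 \<le> a k"
begin

lemma cf_approx_bounds: "0 \<le> cf_approx a n r \<and> cf_approx a n r \<le> 1/2"
proof (induction n arbitrary: r)
  case 0
  then show ?case by simp
next
  case (Suc n)
  have "2 \<le> real (a (Suc r))" using digit_ge_2[of "Suc r"] by simp
  then have "2 \<le> real (a (Suc r)) + cf_approx a n (Suc r)" using Suc.IH[of "Suc r"] by linarith
  then show ?case by (simp add: field_simps)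
qed

lemma cf_approx_Suc_dist: "\<bar>cf_approx a (Suc n) r - cf_approx a n r\<bar> \<le> (1/4) ^ n"
proof (induction n arbitrary: r)
  case 0
  then show ?case using cf_approx_bounds[of 1 r] by simp
next
  case (Suc n)
  let ?c = "real (a (Suc r))" and ?u = "cf_approx a (Suc n) (Suc r)" and ?v = "cf_approx a n (Suc r)"
  have "2 \<le> ?c" using digit_ge_2[of "Suc r"] by simp
  then have u: "2 \<le> ?c + ?u" and v: "2 \<le> ?c + ?v"
    using cf_approx_bounds[of _ "Suc r"] by (meson add_increasing2)+
  have "(2::real) * 2 \<le> (?c + ?u) * (?c + ?v)"
    using u v by (intro mult_mono) auto
  have "\<bar>cf_approx a (Suc (Suc n)) r - cf_approx a (Suc n) r\<bar> = \<bar>1 / (?c + ?u) - 1 / (?c + ?v)\<bar>"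
    by simp
  also have "\<dots> = \<bar>?u - ?v\<bar> / ((?c + ?u) * (?c + ?v))"
    using u v by (intro abs_inverse_add_diff) auto
  also have "\<dots> \<le> \<bar>?u - ?v\<bar> / 4"
    using \<open>2 * 2 \<le> (?c + ?u) * (?c + ?v)\<close> by (intro divide_left_mono) auto
  also have "\<dots> \<le> (1/4) ^ Suc n" using Suc[of "Suc r"] by simp
  finally show ?case .
qed

lemma cf_approx_tendsto: "(\<lambda>n. cf_approx a n r) \<longlonglongrightarrow> cf_tail a r"
proof -
  have "summable (\<lambda>k. cf_approx a (Suc k) r - cf_approx a k r)"
    by (rule summable_comparison_test[where g = "\<lambda>n. (1/4::real) ^ n"])
       (use cf_approx_Suc_dist in \<open>auto intro!: summable_geometric\<close>)
  moreover have "(\<Sum>k<n. cf_approx a (Suc k) r - cf_approx a k r) = cf_approx a n r" for n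
    using sum_lessThan_telescope[of "\<lambda>k. cf_approx a k r"] by simp
  ultimately have "convergent (\<lambda>n. cf_approx a n r)"
    by (simp add: summable_iff_convergent)
  then show ?thesis unfolding cf_tail_def by (simp add: convergent_LIMSEQ_iff)
qed

lemma cf_tail_bounds: "0 \<le> cf_tail a r \<and> cf_tail a r \<le> 1/2"
  using LIMSEQ_le_const[OF cf_approx_tendsto] LIMSEQ_le_const2[OF cf_approx_tendsto]
    cf_approx_bounds by meson

lemma cf_tail_Suc: "cf_tail a r = 1 / (real (a (Suc r)) + cf_tail a (Suc r))"
proof -
  have "real (a (Suc r)) + cf_tail a (Suc r) \<noteq> 0"
    using cf_tail_bounds[of "Suc r"] digit_ge_2[of "Suc r"] by simp
  then have "(\<lambda>n. cf_approx a (Suc n) r) \<longlonglongrightarrow> 1 / (real (a (Suc r)) + cf_tail a (Suc r))"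
    unfolding cf_approx.simps by (intro tendsto_intros cf_approx_tendsto)
  moreover have "(\<lambda>n. cf_approx a (Suc n) r) \<longlonglongrightarrow> cf_tail a r"
    using cf_approx_tendsto LIMSEQ_Suc by blast
  ultimately show ?thesis using LIMSEQ_unique by blast
qed

lemma cf_tail_pos: "0 < cf_tail a r"
  using cf_tail_Suc[of r] cf_tail_bounds[of "Suc r"] digit_ge_2[of "Suc r"] by simp

lemma gauss_map_cf_tail: "gauss_map (cf_tail a r) = cf_tail a (Suc r)"
proof -
  have "1 / cf_tail a r = of_int (int (a (Suc r))) + cf_tail a (Suc r)"
    by (subst cf_tail_Suc) simp
  then have "gauss_map (cf_tail a r) = frac (cf_tail a (Suc r))"
    unfolding gauss_map_def by (simp only: frac_add_of_int_left)
  then show ?thesis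
    using cf_tail_bounds[of "Suc r"] by (simp add: frac_eq)
qed

lemma gauss_map_iterate_cf_tail: "(gauss_map ^^ k) (cf_tail a 0) = cf_tail a k"
  by (induction k) (auto simp: gauss_map_cf_tail)

lemma cf_digit_cf_tail: "1 \<le> k \<Longrightarrow> cf_digit k (cf_tail a 0) = a k"
proof (cases k)
  case (Suc r)
  have "1 / cf_tail a r = of_int (int (a (Suc r))) + cf_tail a (Suc r)"
    by (subst cf_tail_Suc) simp
  then have "\<lfloor>1 / cf_tail a r\<rfloor> = int (a (Suc r))"
    using cf_tail_bounds[of "Suc r"] by (simp add: floor_eq_iff)
  then show ?thesis
    unfolding cf_digit_def using Suc by (simp add: gauss_map_iterate_cf_tail)
qed simp

lemma cf_tail_irrational: "cf_tail a 0 \<notin> \<rat>"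
proof (rule irrational_if_gauss_orbit_in_unit_interval)
  show "0 < (gauss_map ^^ k) (cf_tail a 0) \<and> (gauss_map ^^ k) (cf_tail a 0) < 1" for k
    using cf_tail_pos[of k] cf_tail_bounds[of k] by (simp add: gauss_map_iterate_cf_tail)
qed

end

lemma cf_tail_dist_ge_Suc:
  assumes "cf_large_digits a" "cf_large_digits b" "a (Suc r) = b (Suc r)"
  shows "\<bar>cf_tail a (Suc r) - cf_tail b (Suc r)\<bar> / (real (a (Suc r)) + 1)^2
           \<le> \<bar>cf_tail a r - cf_tail b r\<bar>"
proof -
  let ?c = "real (a (Suc r))" and ?u = "cf_tail a (Suc r)" and ?v = "cf_tail b (Suc r)"
  have c: "2 \<le> ?c" using cf_large_digits.digit_ge_2[OF assms(1), of "Suc r"] by simp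
  have u: "0 \<le> ?u" "?u \<le> 1/2" and v: "0 \<le> ?v" "?v \<le> 1/2"
    using cf_large_digits.cf_tail_bounds[OF assms(1)] cf_large_digits.cf_tail_bounds[OF assms(2)]
    by auto
  have "(?c + ?u) * (?c + ?v) \<le> (?c + 1) * (?c + 1)"
    using c u v by (intro mult_mono) auto
  then have "\<bar>?u - ?v\<bar> / (?c + 1)^2 \<le> \<bar>?u - ?v\<bar> / ((?c + ?u) * (?c + ?v))"
    using c u v by (intro divide_left_mono) (auto simp: power2_eq_square)
  also have "\<dots> = \<bar>1 / (?c + ?u) - 1 / (?c + ?v)\<bar>"
    using c u v by (intro abs_inverse_add_diff[symmetric]) auto
  also have "\<dots> = \<bar>cf_tail a r - cf_tail b r\<bar>"
    using cf_large_digits.cf_tail_Suc[OF assms(1), of r] cf_large_digits.cf_tail_Suc[OF assms(2), of r]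
      assms(3) by simp
  finally show ?thesis .
qed

lemma cf_tail_dist_ge_common_prefix:
  assumes "cf_large_digits a" "cf_large_digits b" "\<And>j. 1 \<le> j \<Longrightarrow> j \<le> r \<Longrightarrow> a j = b j"
  shows "\<bar>cf_tail a r - cf_tail b r\<bar> / (\<Prod>j\<in>{1..r}. (real (a j) + 1)^2)
           \<le> \<bar>cf_tail a 0 - cf_tail b 0\<bar>"
  using assms(3)
proof (induction r)
  case 0
  then show ?case by simp
next
  case (Suc r)
  let ?P = "\<Prod>j\<in>{1..r}. (real (a j) + 1)^2"
  have "\<bar>cf_tail a (Suc r) - cf_tail b (Suc r)\<bar> / (\<Prod>j\<in>{1..Suc r}. (real (a j) + 1)^2)
      = \<bar>cf_tail a (Suc r) - cf_tail b (Suc r)\<bar> / (real (a (Suc r)) + 1)^2 / ?P"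
    by (simp add: prod.nat_ivl_Suc' mult.commute)
  also have "\<dots> \<le> \<bar>cf_tail a r - cf_tail b r\<bar> / ?P"
    using cf_tail_dist_ge_Suc[OF assms(1,2)] Suc.prems
    by (intro divide_right_mono) (auto intro: prod_nonneg)
  also have "\<dots> \<le> \<bar>cf_tail a 0 - cf_tail b 0\<bar>"
    using Suc by simp
  finally show ?case .
qed

lemma inverse_add_diff_ge:
  fixes A B u v :: real
  assumes "A \<in> \<int>" "B \<in> \<int>" "A < B" "1 \<le> A" "0 \<le> u" "u \<le> 1/2" "0 \<le> v" "v \<le> 1/2"
  shows "(B - A) / (2 * (A + 1) * (B + 1)) \<le> 1 / (A + u) - 1 / (B + v)"
proof -
  from \<open>A \<in> \<int>\<close> \<open>B \<in> \<int>\<close> obtain i j where ij: "A = of_int i" "B = of_int j"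
    by (auto elim!: Ints_cases)
  then have "i + 1 \<le> j" using \<open>A < B\<close> by simp
  then have "A + 1 \<le> B" unfolding ij by (metis of_int_1 of_int_add of_int_le_iff)
  then have "(B - A) / (2 * (A + 1) * (B + 1)) = ((B - A) / 2) / ((A + 1) * (B + 1))"
    by simp
  also have "\<dots> \<le> (B + v - (A + u)) / ((A + u) * (B + v))"
    using assms \<open>A + 1 \<le> B\<close> by (intro frac_le mult_mono) auto
  also have "\<dots> = 1 / (A + u) - 1 / (B + v)"
    using assms by (simp add: field_simps)
  finally show ?thesis .
qed

lemma inverse_add_dist_ge:
  fixes A B u v :: real
  assumes "A \<in> \<int>" "B \<in> \<int>" "1 \<le> A" "1 \<le> B" "0 \<le> u" "u \<le> 1/2" "0 \<le> v" "v \<le> 1/2"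
  shows "\<bar>A - B\<bar> / (2 * (A + 1) * (B + 1)) \<le> \<bar>1 / (A + u) - 1 / (B + v)\<bar>"
proof (cases A B rule: linorder_cases)
  case less
  then have "\<bar>A - B\<bar> / (2 * (A + 1) * (B + 1)) \<le> 1 / (A + u) - 1 / (B + v)"
    using inverse_add_diff_ge[of A B u v] assms by simp
  then show ?thesis by linarith
next
  case greater
  then have "\<bar>A - B\<bar> / (2 * (A + 1) * (B + 1)) = (A - B) / (2 * (B + 1) * (A + 1))"
    by (simp add: algebra_simps)
  also have "\<dots> \<le> 1 / (B + v) - 1 / (A + u)"
    using inverse_add_diff_ge[of B A v u] greater assms by simp
  finally show ?thesis by linarith
qed simp

lemma cf_tail_dist_ge_first_digit:
  assumes "cf_large_digits a" "cf_large_digits b"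
  shows "\<bar>real (a (Suc r)) - real (b (Suc r))\<bar> / (2 * (real (a (Suc r)) + 1) * (real (b (Suc r)) + 1))
           \<le> \<bar>cf_tail a r - cf_tail b r\<bar>"
  using cf_large_digits.digit_ge_2[OF assms(1), of "Suc r"] cf_large_digits.digit_ge_2[OF assms(2), of "Suc r"]
    cf_large_digits.cf_tail_bounds[OF assms(1), of "Suc r"] cf_large_digits.cf_tail_bounds[OF assms(2), of "Suc r"]
  by (subst cf_large_digits.cf_tail_Suc[OF assms(1)], subst cf_large_digits.cf_tail_Suc[OF assms(2)],
      intro inverse_add_dist_ge) auto

section \<open>Hausdorff measure and inverse Hoelder maps\<close>

lemma subset_Icc_Inf_if_dist_le:
  fixes V :: "real set"
  assumes "\<And>y y'. y \<in> V \<Longrightarrow> y' \<in> V \<Longrightarrow> \<bar>y - y'\<bar> \<le> d"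
  shows "V \<subseteq> {Inf V .. Inf V + d}"
proof
  fix y assume "y \<in> V"
  then have "bdd_below V"
    using assms by (intro bdd_belowI[of _ "y - d"]) (metis abs_diff_le_iff diff_le_eq)
  have "Inf V \<le> y" using \<open>y \<in> V\<close> \<open>bdd_below V\<close> by (rule cInf_lower)
  moreover have "y - d \<le> Inf V"
  proof (rule cInf_greatest)
    fix x assume "x \<in> V"
    then show "y - d \<le> x" using assms[of y x] \<open>y \<in> V\<close> by (simp add: abs_le_iff)
  qed (use \<open>y \<in> V\<close> in auto)
  ultimately show "y \<in> {Inf V .. Inf V + d}" by simp
qed

lemma interval_cover_length_sum_ge:
  fixes a d :: "nat \<Rightarrow> real"
  assumes "{0..<1} \<subseteq> (\<Union>i. {a i .. a i + d i})" "\<And>i. 0 \<le> d i"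
  shows "1 \<le> (\<Sum>i. ennreal (d i))"
proof -
  have "emeasure lborel {0..<1::real} \<le> emeasure lborel (\<Union>i. {a i .. a i + d i})"
    using assms(1) by (rule emeasure_mono) auto
  also have "\<dots> \<le> (\<Sum>i. emeasure lborel {a i .. a i + d i})"
    by (rule emeasure_subadditive_countably) auto
  finally show ?thesis using assms(2) by simp
qed

lemma inverse_hoelder_cover_sum_ge:
  fixes g :: "real \<Rightarrow> real" and U :: "nat \<Rightarrow> real set"
  assumes "0 < C" "0 < s"
    and "g ` {0..<1} \<subseteq> (\<Union>i. U i)" and "\<And>i. bounded (U i)"
    and hoelder: "\<And>y y'. y \<in> {0..<1} \<Longrightarrow> y' \<in> {0..<1} \<Longrightarrow> \<bar>y - y'\<bar> \<le> C * \<bar>g y - g y'\<bar> powr s"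
  shows "ennreal (1 / C) \<le> (\<Sum>i. ennreal (diameter (U i) powr s))"
proof -
  define V where "V i = {y \<in> {0..<1}. g y \<in> U i}" for i
  define d where "d i = C * diameter (U i) powr s" for i
  have V_subset: "V i \<subseteq> {Inf (V i) .. Inf (V i) + d i}" for i
  proof (rule subset_Icc_Inf_if_dist_le)
    fix y y' assume "y \<in> V i" "y' \<in> V i"
    then have "\<bar>g y - g y'\<bar> \<le> diameter (U i)"
      using diameter_bounded_bound[OF assms(4)] unfolding V_def by (simp add: dist_real_def)
    then have "C * \<bar>g y - g y'\<bar> powr s \<le> d i"
      unfolding d_def using \<open>0 < C\<close> \<open>0 < s\<close> by (intro mult_left_mono powr_mono2) auto
    then show "\<bar>y - y'\<bar> \<le> d i"
      using hoelder[of y y'] \<open>y \<in> V i\<close> \<open>y' \<in> V i\<close> unfolding V_def by simp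
  qed
  have "{0..<1} \<subseteq> (\<Union>i. V i)"
  proof
    fix y :: real assume "y \<in> {0..<1}"
    then obtain i where "g y \<in> U i" using assms(3) by blast
    then show "y \<in> (\<Union>i. V i)" using \<open>y \<in> {0..<1}\<close> unfolding V_def by blast
  qed
  then have "{0..<1} \<subseteq> (\<Union>i. {Inf (V i) .. Inf (V i) + d i})"
    using V_subset by blast
  moreover have "0 \<le> d i" for i
    using \<open>0 < C\<close> by (simp add: d_def)
  ultimately have "1 \<le> (\<Sum>i. ennreal (d i))"
    by (rule interval_cover_length_sum_ge)
  also have "\<dots> = ennreal C * (\<Sum>i. ennreal (diameter (U i) powr s))"
    using \<open>0 < C\<close> by (simp add: d_def ennreal_mult)
  finally have "ennreal (1 / C) * 1 \<le> ennreal (1 / C) * ennreal C * (\<Sum>i. ennreal (diameter (U i) powr s))"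
    unfolding mult.assoc by (rule mult_left_mono) simp
  also have "ennreal (1 / C) * ennreal C = 1"
    using \<open>0 < C\<close> by (simp flip: ennreal_mult)
  finally show ?thesis by simp
qed

lemma hausdorff_measure_pos_if_inverse_hoelder:
  fixes g :: "real \<Rightarrow> real"
  assumes "0 < C" "0 < s" "g ` {0..<1} \<subseteq> G"
    and "\<And>y y'. y \<in> {0..<1} \<Longrightarrow> y' \<in> {0..<1} \<Longrightarrow> \<bar>y - y'\<bar> \<le> C * \<bar>g y - g y'\<bar> powr s"
  shows "hausdorff_measure s G \<noteq> 0"
proof -
  have "ennreal (1 / C) \<le> hausdorff_pre s 1 G"
    unfolding hausdorff_pre_def
    using assms by (intro INF_greatest inverse_hoelder_cover_sum_ge) auto
  also have "\<dots> \<le> hausdorff_measure s G"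
    unfolding hausdorff_measure_def by (rule SUP_upper) auto
  finally show ?thesis using \<open>0 < C\<close> by (auto simp: ennreal_eq_0_iff)
qed

lemma hausdorff_pre_2_le_if_subset_unit_interval:
  assumes "G \<subseteq> {0..1}" "1 \<le> k" "1 / real k \<le> \<delta>"
  shows "hausdorff_pre 2 \<delta> G \<le> ennreal (2 / real k)"
proof -
  define U where "U i = (if i \<le> k then {real i / k .. (real i + 1) / k} else {})" for i
  have diameter_U: "diameter (U i) = (if i \<le> k then 1 / real k else 0)" for i
    unfolding U_def using \<open>1 \<le> k\<close> by (auto simp: field_simps)
  have "G \<subseteq> (\<Union>i. U i)"
  proof
    fix y assume "y \<in> G"
    then have "0 \<le> y" "y \<le> 1" using assms(1) by auto
    define i where "i = nat \<lfloor>y * k\<rfloor>"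
    have "real i \<le> y * k" "y * k \<le> real i + 1" "i \<le> k"
      unfolding i_def using \<open>0 \<le> y\<close> \<open>y \<le> 1\<close> mult_left_le_one_le[of "real k" y]
      by (auto simp: le_nat_iff) linarith+
    then have "y \<in> U i" unfolding U_def using \<open>1 \<le> k\<close> by (simp add: field_simps)
    then show "y \<in> (\<Union>i. U i)" by blast
  qed
  moreover have "bounded (U i) \<and> diameter (U i) \<le> \<delta>" for i
  proof -
    have "0 < 1 / real k" using \<open>1 \<le> k\<close> by simp
    then have "0 \<le> \<delta>" using assms(3) by linarith
    then show ?thesis using assms(3) diameter_U[of i] unfolding U_def by auto
  qed
  ultimately have "hausdorff_pre 2 \<delta> G \<le> (\<Sum>i. ennreal (diameter (U i) powr 2))"
    unfolding hausdorff_pre_def by (intro INF_lower) auto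
  also have "\<dots> = (\<Sum>i\<le>k. ennreal ((1 / real k) powr 2))"
    by (subst suminf_finite[of "{..k}"]) (auto simp: diameter_U)
  also have "\<dots> = ennreal ((real k + 1) / real k ^ 2)"
    using \<open>1 \<le> k\<close> by (subst sum_ennreal) (auto simp: power_divide)
  also have "\<dots> \<le> ennreal (2 / real k)"
    using \<open>1 \<le> k\<close> by (intro ennreal_leI) (simp add: field_simps power2_eq_square)
  finally show ?thesis .
qed

lemma hausdorff_measure_2_eq_0_if_subset_unit_interval:
  assumes "G \<subseteq> {0..1}"
  shows "hausdorff_measure 2 G = 0"
proof -
  have "hausdorff_pre 2 \<delta> G = 0" if "0 < \<delta>" for \<delta>
  proof -
    have "hausdorff_pre 2 \<delta> G \<le> 0"
    proof (rule ennreal_le_epsilon)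
      fix e :: real assume "0 < e"
      obtain k :: nat where k: "max (2 / \<delta>) (2 / e) < k" using reals_Archimedean2 by blast
      moreover have "0 < 2 / \<delta>" using that by simp
      ultimately have "0 < real k" by linarith
      then have "1 \<le> k" "1 / real k \<le> \<delta>" "2 / real k \<le> e"
        using k that \<open>0 < e\<close> by (auto simp: field_simps)
      then show "hausdorff_pre 2 \<delta> G \<le> 0 + ennreal e"
        using hausdorff_pre_2_le_if_subset_unit_interval[OF assms \<open>1 \<le> k\<close>] ennreal_leI by force
    qed
    then show ?thesis by simp
  qed
  then show ?thesis
    unfolding hausdorff_measure_def by simp
qed

lemma hausdorff_dim_ge_if_measure_pos:
  assumes "G \<subseteq> {0..1}" "\<And>s. 0 < s \<Longrightarrow> s < t \<Longrightarrow> hausdorff_measure s G \<noteq> 0"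
  shows "t \<le> hausdorff_dim G"
  unfolding hausdorff_dim_def
proof (rule cInf_greatest)
  have "2 \<in> {s. 0 < s \<and> hausdorff_measure s G = 0}"
    using hausdorff_measure_2_eq_0_if_subset_unit_interval[OF assms(1)] by simp
  then show "{s. 0 < s \<and> hausdorff_measure s G = 0} \<noteq> {}" by blast
qed (use assms(2) not_less in blast)

section \<open>Coding the unit interval into the set G\<close>

lemma abs_diff_less_floor_diff_add_1:
  fixes a b :: real
  shows "\<bar>a - b\<bar> < \<bar>of_int (\<lfloor>a\<rfloor> - \<lfloor>b\<rfloor>)\<bar> + 1"
  by linarith

lemma floor_mult_sub_mult_floor_bounds:
  fixes z :: real and N :: int
  assumes "0 < N"
  shows "0 \<le> \<lfloor>z * N\<rfloor> - N * \<lfloor>z\<rfloor> \<and> \<lfloor>z * N\<rfloor> - N * \<lfloor>z\<rfloor> < N"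
proof -
  have "of_int (N * \<lfloor>z\<rfloor>) \<le> z * N"
    using assms by (simp add: mult.commute mult_left_mono)
  then have lower: "N * \<lfloor>z\<rfloor> \<le> \<lfloor>z * N\<rfloor>" by (simp only: le_floor_iff)
  have "z < of_int \<lfloor>z\<rfloor> + 1" by linarith
  then have "z * N < of_int (N * \<lfloor>z\<rfloor> + N)"
    using assms mult_strict_left_mono[of z "of_int \<lfloor>z\<rfloor> + 1" "of_int N"] by (simp add: algebra_simps)
  then have upper: "\<lfloor>z * N\<rfloor> < N * \<lfloor>z\<rfloor> + N" by (simp only: floor_less_iff)
  show ?thesis using lower upper by simp
qed

lemma prod_Suc_square_le_power_2:
  fixes d :: "nat \<Rightarrow> nat"
  assumes "\<And>j. 1 \<le> j \<Longrightarrow> d j < 2 ^ Suc j"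
  shows "(\<Prod>j\<in>{1..r}. (real (d j) + 1)^2) \<le> 2 ^ (r * (r + 3))"
proof (induction r)
  case (Suc r)
  have "real (d (Suc r)) + 1 \<le> 2 ^ (r + 2)"
    using assms[of "Suc r"] by (simp add: nat_less_real_le flip: of_nat_Suc)
  then have "(real (d (Suc r)) + 1)^2 \<le> (2 ^ (r + 2))^2" by (intro power_mono) auto
  then have "(\<Prod>j\<in>{1..Suc r}. (real (d j) + 1)^2) \<le> 2 ^ (r * (r + 3)) * (2 ^ (r + 2))^2"
    using Suc by (simp add: prod.nat_ivl_Suc' mult_mono prod_nonneg)
  also have "\<dots> = 2 ^ (r * (r + 3) + (r + 2) * 2)"
    by (simp only: power_add power_mult)
  also have "r * (r + 3) + (r + 2) * 2 = Suc r * (Suc r + 3)"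
    by (simp add: algebra_simps)
  finally show ?case .
qed simp

lemma two_power_add_le: "(2::nat) ^ b + t \<le> 2 ^ (b + t)"
proof (induction t)
  case (Suc t)
  have "(1::nat) \<le> 2 ^ (b + t)" "(2::nat) ^ (b + Suc t) = 2 * 2 ^ (b + t)" by simp_all
  then show ?case using Suc.IH by linarith
qed simp

locale block_positions =
  fixes \<sigma> :: "nat \<Rightarrow> nat"
  assumes block_start_pos: "\<And>n. 1 \<le> n \<Longrightarrow> 0 < \<sigma> n"
    and block_gap: "\<And>n. 1 \<le> n \<Longrightarrow> \<sigma> n + n \<le> \<sigma> (Suc n)"
begin

lemma block_start_add_le: "1 \<le> m \<Longrightarrow> m < m' \<Longrightarrow> \<sigma> m + m \<le> \<sigma> m'"
proof (induction m' rule: less_induct)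
  case (less m')
  then obtain p where p: "m' = Suc p" by (cases m') auto
  show ?case
  proof (cases "m = p")
    case True
    then show ?thesis using block_gap[of m] less p by simp
  next
    case False
    then show ?thesis using less block_gap[of p] p by fastforce
  qed
qed

lemma block_unique:
  assumes "1 \<le> m" "\<sigma> m \<le> k" "k < \<sigma> m + m" "1 \<le> m'" "\<sigma> m' \<le> k" "k < \<sigma> m' + m'"
  shows "m = m'"
  using block_start_add_le[of m m'] block_start_add_le[of m' m] assms by (cases m m' rule: linorder_cases) auto

lemma block_start_ge: "1 \<le> m \<Longrightarrow> m \<le> \<sigma> m"
proof (induction m rule: nat_induct_at_least)
  case base
  then show ?case using block_start_pos[of 1] by simp
next
  case (Suc m)
  then show ?case using block_gap[of m] by simp
qed

lemma block_start_square_le: "1 \<le> m \<Longrightarrow> m * m \<le> 2 * \<sigma> m + m"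
proof (induction m rule: nat_induct_at_least)
  case base
  then show ?case by simp
next
  case (Suc m)
  then show ?case using block_gap[of m] by simp
qed

definition in_block :: "nat \<Rightarrow> bool" where
  "in_block k \<longleftrightarrow> (\<exists>m. 1 \<le> m \<and> \<sigma> m \<le> k \<and> k < \<sigma> m + m)"

definition block_of :: "nat \<Rightarrow> nat" where
  "block_of k = (THE m. 1 \<le> m \<and> \<sigma> m \<le> k \<and> k < \<sigma> m + m)"

lemma block_of_eq: "1 \<le> m \<Longrightarrow> \<sigma> m \<le> k \<Longrightarrow> k < \<sigma> m + m \<Longrightarrow> block_of k = m"
  unfolding block_of_def using block_unique by (intro the_equality) blast+

definition free_weight :: "nat \<Rightarrow> nat" where
  "free_weight n = (\<Sum>j=1..n. if in_block j then 0 else j)"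

lemma free_weight_0 [simp]: "free_weight 0 = 0"
  by (simp add: free_weight_def)

lemma free_weight_Suc:
  "free_weight (Suc k) = free_weight k + (if in_block (Suc k) then 0 else Suc k)"
  by (simp add: free_weight_def)

definition dyadic_prefix :: "real \<Rightarrow> nat \<Rightarrow> int" where
  "dyadic_prefix y k = \<lfloor>y * 2 ^ free_weight k\<rfloor>"

text \<open>The free positions up to \<open>k\<close> read the first \<^term>\<open>free_weight k\<close> binary digits of \<open>y\<close>,
  i.e. \<^term>\<open>dyadic_prefix y k\<close>. At a free position \<open>k\<close> the next \<open>k\<close> digits,
  \<open>dyadic_prefix y k - 2 ^ k * dyadic_prefix y (k - 1) \<in> {0..<2 ^ k}\<close>, are stored as the offset of the
  partial quotient from \<open>2 ^ k\<close>; the positions of the \<open>m\<close>-th block carry the progression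
  \<open>2 ^ \<sigma> m, 2 ^ \<sigma> m + 1, \<dots>\<close>.\<close>
definition coded_digit :: "real \<Rightarrow> nat \<Rightarrow> nat" where
  "coded_digit y k =
     (if in_block k then 2 ^ \<sigma> (block_of k) + (k - \<sigma> (block_of k))
      else 2 ^ k + nat (dyadic_prefix y k - 2 ^ k * dyadic_prefix y (k - 1)))"

definition coded_point :: "real \<Rightarrow> real" where
  "coded_point y = cf_tail (coded_digit y) 0"

lemma dyadic_prefix_step_bounds:
  assumes "1 \<le> k" "\<not> in_block k"
  shows "0 \<le> dyadic_prefix y k - 2 ^ k * dyadic_prefix y (k - 1)
         \<and> dyadic_prefix y k - 2 ^ k * dyadic_prefix y (k - 1) < 2 ^ k"
proof -
  obtain r where k: "k = Suc r" using assms(1) by (cases k) auto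
  have "y * 2 ^ free_weight k = (y * 2 ^ free_weight (k - 1)) * real_of_int (2 ^ k)"
    using free_weight_Suc[of r] assms(2) k by (simp add: power_add)
  then show ?thesis
    unfolding dyadic_prefix_def by (simp only:) (rule floor_mult_sub_mult_floor_bounds, simp)
qed

lemma coded_digit_block:
  "1 \<le> m \<Longrightarrow> \<sigma> m \<le> k \<Longrightarrow> k < \<sigma> m + m \<Longrightarrow> coded_digit y k = 2 ^ \<sigma> m + (k - \<sigma> m)"
  unfolding coded_digit_def in_block_def using block_of_eq by auto

lemma coded_digit_free:
  assumes "1 \<le> k" "\<not> in_block k"
  shows "int (coded_digit y k) = 2 ^ k + (dyadic_prefix y k - 2 ^ k * dyadic_prefix y (k - 1))"
  using dyadic_prefix_step_bounds[OF assms, of y] assms(2) by (simp add: coded_digit_def)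

lemma coded_digit_free_bounds:
  assumes "1 \<le> k" "\<not> in_block k"
  shows "2 ^ k \<le> coded_digit y k \<and> coded_digit y k < 2 ^ Suc k"
proof -
  have "int (2 ^ k) \<le> int (coded_digit y k) \<and> int (coded_digit y k) < int (2 ^ Suc k)"
    using coded_digit_free[OF assms, of y] dyadic_prefix_step_bounds[OF assms, of y] by simp
  then show ?thesis by (simp only: of_nat_le_iff of_nat_less_iff)
qed

lemma coded_digit_bounds:
  assumes "1 \<le> k"
  shows "2 \<le> coded_digit y k \<and> coded_digit y k < 2 ^ Suc k"
proof (cases "in_block k")
  case True
  then obtain m where m: "1 \<le> m" "\<sigma> m \<le> k" "k < \<sigma> m + m" unfolding in_block_def by auto
  have "(2::nat) ^ 1 \<le> 2 ^ \<sigma> m" using block_start_pos[OF m(1)] by (intro power_increasing) auto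
  moreover have "(2::nat) ^ \<sigma> m + (k - \<sigma> m) \<le> 2 ^ k"
    using two_power_add_le[of "\<sigma> m" "k - \<sigma> m"] m(2) by simp
  ultimately show ?thesis using coded_digit_block[OF m] by simp
next
  case False
  have "(2::nat) ^ 1 \<le> 2 ^ k" using assms by (intro power_increasing) auto
  then show ?thesis using coded_digit_free_bounds[OF assms False, of y] by simp
qed

lemma coded_digit_less_Suc:
  assumes "1 \<le> k"
  shows "coded_digit y k < coded_digit y (Suc k)"
proof (cases "in_block (Suc k)")
  case True
  then obtain m where m: "1 \<le> m" "\<sigma> m \<le> Suc k" "Suc k < \<sigma> m + m" unfolding in_block_def by auto
  show ?thesis
  proof (cases "\<sigma> m = Suc k")
    case True
    then show ?thesis using coded_digit_block[OF m, of y] coded_digit_bounds[OF assms, of y] by simp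
  next
    case False
    then have "\<sigma> m \<le> k" "k < \<sigma> m + m" using m by auto
    then show ?thesis using coded_digit_block[OF m, of y] coded_digit_block[OF m(1), of k y] by simp
  qed
next
  case False
  then show ?thesis
    using coded_digit_free_bounds[of "Suc k" y] coded_digit_bounds[OF assms, of y] by simp
qed

lemma cf_large_digits_coded_digit: "cf_large_digits (coded_digit y)"
  using coded_digit_bounds by unfold_locales blast

lemma cf_digit_coded_point: "1 \<le> k \<Longrightarrow> cf_digit k (coded_point y) = coded_digit y k"
  unfolding coded_point_def using cf_large_digits.cf_digit_cf_tail[OF cf_large_digits_coded_digit] .

lemma coded_point_in_G_set: "coded_point y \<in> G_set \<sigma>"
proof -
  interpret cf_large_digits "coded_digit y" by (rule cf_large_digits_coded_digit)
  have "coded_point y \<in> J_set"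
    unfolding J_set_def coded_point_def
    using cf_tail_pos[of 0] cf_tail_bounds[of 0] cf_tail_irrational coded_digit_less_Suc
      cf_digit_coded_point[unfolded coded_point_def] by auto
  moreover have "is_AP_block (coded_point y) (\<sigma> n) n" if "1 \<le> n" for n
  proof -
    have digits: "cf_digit (\<sigma> n + j) (coded_point y) = 2 ^ \<sigma> n + j" if "j < n" for j
      using cf_digit_coded_point[of "\<sigma> n + j" y] coded_digit_block[OF \<open>1 \<le> n\<close>, of "\<sigma> n + j" y]
        block_start_pos[OF \<open>1 \<le> n\<close>] that by simp
    then show ?thesis
      unfolding is_AP_block_def using digits[of 0] \<open>1 \<le> n\<close> by (intro exI[of _ 1]) auto
  qed
  ultimately show ?thesis unfolding G_set_def by auto
qed

end

lemma dyadic_hoelder_estimate: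
  fixes x z D n W E C s :: real
  assumes "0 < s" "s \<le> 1" "1 \<le> D" "D \<le> 2 powr n"
    and "\<bar>x\<bar> \<le> (D + 1) / 2 powr W" "D / 2 powr E \<le> \<bar>z\<bar>" "1 + n + s * E \<le> W + C"
  shows "\<bar>x\<bar> \<le> 2 powr C * \<bar>z\<bar> powr s"
proof -
  have "D powr (1 - s) \<le> D powr 1"
    using assms(1,3) by (intro powr_mono) auto
  then have "D powr (1 - s) \<le> 2 powr n"
    using assms(3,4) by simp
  have "\<bar>x\<bar> \<le> 2 * D / 2 powr W"
    using assms(3,5) divide_right_mono[of "D + 1" "2 * D" "2 powr W"] by simp
  also have "\<dots> = 2 * (D powr s * D powr (1 - s)) / 2 powr W"
    using assms(3) by (simp flip: powr_add)
  also have "\<dots> \<le> 2 * (D powr s * 2 powr n) / 2 powr W"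
    using \<open>D powr (1 - s) \<le> 2 powr n\<close> by (intro divide_right_mono mult_left_mono) auto
  also have "\<dots> = D powr s * 2 powr (1 + n - W)"
    by (simp add: powr_add powr_diff)
  also have "\<dots> \<le> D powr s * 2 powr (C - s * E)"
    using assms(7) by (intro mult_left_mono) auto
  also have "\<dots> = 2 powr C * (D / 2 powr E) powr s"
    using assms(3) by (simp add: powr_divide powr_diff powr_powr mult.commute)
  also have "\<dots> \<le> 2 powr C * \<bar>z\<bar> powr s"
    using assms(1,3,6) by (intro mult_left_mono powr_mono2) auto
  finally show ?thesis .
qed

context block_positions
begin

lemma dyadic_prefix_0: "y \<in> {0..<1} \<Longrightarrow> dyadic_prefix y 0 = 0"
  by (simp add: dyadic_prefix_def floor_eq_iff)

lemma dyadic_prefix_block: "in_block (Suc k) \<Longrightarrow> dyadic_prefix y (Suc k) = dyadic_prefix y k"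
  by (simp add: dyadic_prefix_def free_weight_Suc)

lemma dyadic_prefix_first_difference:
  assumes "y \<in> {0..<1}" "y' \<in> {0..<1}" "y \<noteq> y'"
    and unbounded: "\<And>B. \<exists>n. B \<le> free_weight n"
  obtains n where "1 \<le> n" "\<not> in_block n" "\<And>j. j < n \<Longrightarrow> dyadic_prefix y j = dyadic_prefix y' j"
    "dyadic_prefix y n \<noteq> dyadic_prefix y' n"
proof -
  obtain w :: nat where "1 / \<bar>y - y'\<bar> < w" using reals_Archimedean2 by blast
  also have "real w < 2 ^ w" by (rule of_nat_less_two_power)
  also obtain k where "w \<le> free_weight k" using unbounded by blast
  then have "(2::real) ^ w \<le> 2 ^ free_weight k" by (intro power_increasing) auto
  finally have "1 / \<bar>y - y'\<bar> < 2 ^ free_weight k" .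
  moreover have "0 < \<bar>y - y'\<bar>" using assms(3) by simp
  ultimately have "1 < 2 ^ free_weight k * \<bar>y - y'\<bar>" by (simp only: pos_divide_less_eq)
  also have "\<dots> = \<bar>(y - y') * 2 ^ free_weight k\<bar>" by (simp add: abs_mult)
  also have "\<dots> = \<bar>y * 2 ^ free_weight k - y' * 2 ^ free_weight k\<bar>" by (simp only: left_diff_distrib)
  finally have "1 < \<bar>y * 2 ^ free_weight k - y' * 2 ^ free_weight k\<bar>" .
  then have "dyadic_prefix y k \<noteq> dyadic_prefix y' k"
    unfolding dyadic_prefix_def
    using abs_diff_less_floor_diff_add_1[of "y * 2 ^ free_weight k" "y' * 2 ^ free_weight k"] by auto
  then have ex: "\<exists>k. dyadic_prefix y k \<noteq> dyadic_prefix y' k" by blast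
  define n where "n = (LEAST k. dyadic_prefix y k \<noteq> dyadic_prefix y' k)"
  have differ: "dyadic_prefix y n \<noteq> dyadic_prefix y' n"
    unfolding n_def using LeastI_ex[OF ex] .
  have agree: "dyadic_prefix y j = dyadic_prefix y' j" if "j < n" for j
    using not_less_Least that unfolding n_def by blast
  obtain r where n: "n = Suc r"
    using differ dyadic_prefix_0[OF assms(1)] dyadic_prefix_0[OF assms(2)] by (cases n) auto
  then have "\<not> in_block n"
    using differ agree[of r] dyadic_prefix_block[of r] by auto
  then show ?thesis using that[of n] n differ agree by simp
qed

lemma coded_digit_eq_if_prefix_eq:
  assumes "\<And>j. j < n \<Longrightarrow> dyadic_prefix y j = dyadic_prefix y' j" "j < n"
  shows "coded_digit y j = coded_digit y' j"
  using assms(1)[of j] assms(1)[of "j - 1"] assms(2) by (simp add: coded_digit_def)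

lemma coded_digit_diff_if_prefix_eq:
  assumes "\<And>j. j < n \<Longrightarrow> dyadic_prefix y j = dyadic_prefix y' j" "1 \<le> n" "\<not> in_block n"
  shows "int (coded_digit y n) - int (coded_digit y' n) = dyadic_prefix y n - dyadic_prefix y' n"
  using coded_digit_free[OF assms(2,3)] assms(1)[of "n - 1"] assms(2) by simp

lemma coded_point_dist_ge:
  assumes "1 \<le> n" "\<not> in_block n" "\<And>j. j < n \<Longrightarrow> dyadic_prefix y j = dyadic_prefix y' j"
  shows "\<bar>of_int (dyadic_prefix y n - dyadic_prefix y' n)\<bar> / 2 ^ (n^2 + 3 * n + 1)
           \<le> \<bar>coded_point y - coded_point y'\<bar>"
proof -
  obtain r where n: "n = Suc r" using assms(1) by (cases n) auto
  let ?a = "coded_digit y" and ?b = "coded_digit y'"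
  let ?D = "\<bar>of_int (dyadic_prefix y n - dyadic_prefix y' n)\<bar> :: real"
  have large: "cf_large_digits ?a" "cf_large_digits ?b" by (fact cf_large_digits_coded_digit)+
  have "real_of_int (int (?a n) - int (?b n)) = of_int (dyadic_prefix y n - dyadic_prefix y' n)"
    using coded_digit_diff_if_prefix_eq[OF assms(3,1,2)] by (simp only:)
  then have digit_diff: "?D = \<bar>real (?a n) - real (?b n)\<bar>" by simp
  have "real (?a n) + 1 \<le> 2 ^ (r + 2)" "real (?b n) + 1 \<le> 2 ^ (r + 2)"
    using coded_digit_bounds[OF assms(1), of y] coded_digit_bounds[OF assms(1), of y'] n
    by (simp_all add: nat_less_real_le flip: of_nat_Suc)
  then have "2 * (real (?a n) + 1) * (real (?b n) + 1) \<le> 2 * 2 ^ (r + 2) * 2 ^ (r + 2)"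
    by (intro mult_mono) auto
  moreover have "0 < 2 * (real (?a n) + 1) * (real (?b n) + 1)" by simp
  ultimately have "?D / (2 * 2 ^ (r + 2) * 2 ^ (r + 2)) \<le> ?D / (2 * (real (?a n) + 1) * (real (?b n) + 1))"
    by (intro divide_left_mono mult_pos_pos) simp_all
  also have "\<dots> \<le> \<bar>cf_tail ?a r - cf_tail ?b r\<bar>"
    using cf_tail_dist_ge_first_digit[OF large, of r] n digit_diff by simp
  finally have "?D / (2 * 2 ^ (r + 2) * 2 ^ (r + 2)) \<le> \<bar>cf_tail ?a r - cf_tail ?b r\<bar>" .
  moreover have "(\<Prod>j\<in>{1..r}. (real (?a j) + 1)^2) \<le> 2 ^ (r * (r + 3))"
    using coded_digit_bounds by (intro prod_Suc_square_le_power_2) blast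
  ultimately have "?D / (2 * 2 ^ (r + 2) * 2 ^ (r + 2)) / 2 ^ (r * (r + 3))
      \<le> \<bar>cf_tail ?a r - cf_tail ?b r\<bar> / (\<Prod>j\<in>{1..r}. (real (?a j) + 1)^2)"
    by (intro frac_le) (auto intro: prod_pos)
  also have "\<dots> \<le> \<bar>coded_point y - coded_point y'\<bar>"
    unfolding coded_point_def using assms(3) n
    by (intro cf_tail_dist_ge_common_prefix[OF large] coded_digit_eq_if_prefix_eq[of n]) auto
  also have "?D / (2 * 2 ^ (r + 2) * 2 ^ (r + 2)) / 2 ^ (r * (r + 3)) = ?D / 2 ^ (n^2 + 3 * n + 1)"
  proof -
    have "n^2 + 3 * n + 1 = 1 + (r + 2) + (r + 2) + r * (r + 3)"
      unfolding n by (simp add: power2_eq_square algebra_simps)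
    then show ?thesis by (simp add: power_add mult_ac)
  qed
  finally show ?thesis .
qed

lemma dyadic_prefix_diff_less:
  assumes "1 \<le> n" "\<not> in_block n" "\<And>j. j < n \<Longrightarrow> dyadic_prefix y j = dyadic_prefix y' j"
  shows "\<bar>dyadic_prefix y n - dyadic_prefix y' n\<bar> < 2 ^ n"
proof -
  have "\<bar>int (coded_digit y n) - int (coded_digit y' n)\<bar> < int (2 ^ n)"
    using coded_digit_free_bounds[OF assms(1,2), of y] coded_digit_free_bounds[OF assms(1,2), of y']
    unfolding power_Suc by linarith
  then show ?thesis
    by (simp only: coded_digit_diff_if_prefix_eq[OF assms(3,1,2)] of_nat_power of_nat_numeral)
qed

lemma dist_le_dyadic_prefix_diff:
  "\<bar>y - y'\<bar> \<le> (\<bar>of_int (dyadic_prefix y n - dyadic_prefix y' n)\<bar> + 1) / 2 ^ free_weight n"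
proof -
  have "\<bar>y - y'\<bar> * 2 ^ free_weight n = \<bar>(y - y') * 2 ^ free_weight n\<bar>"
    by (simp add: abs_mult)
  also have "\<dots> = \<bar>y * 2 ^ free_weight n - y' * 2 ^ free_weight n\<bar>"
    by (simp only: left_diff_distrib)
  also have "\<dots> \<le> \<bar>of_int (dyadic_prefix y n - dyadic_prefix y' n)\<bar> + 1"
    using abs_diff_less_floor_diff_add_1[of "y * 2 ^ free_weight n" "y' * 2 ^ free_weight n"]
    unfolding dyadic_prefix_def by linarith
  finally show ?thesis
    by (simp add: pos_le_divide_eq)
qed

lemma free_weight_unbounded:
  fixes s C :: real
  assumes "0 \<le> s"
    and growth: "\<And>n. 1 + real n + s * (real n ^ 2 + 3 * real n + 1) \<le> real (free_weight n) + C"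
  shows "\<exists>n. B \<le> free_weight n"
proof
  define m where "m = B + nat \<lceil>C\<rceil>"
  have "0 \<le> s * ((real m)^2 + 3 * real m + 1)" using assms(1) by simp
  then have "real m \<le> real (free_weight m) + C" using growth[of m] by linarith
  moreover have "real m = real B + real (nat \<lceil>C\<rceil>)" "C \<le> real (nat \<lceil>C\<rceil>)"
    unfolding m_def by linarith+
  ultimately show "B \<le> free_weight m" by linarith
qed

lemma coded_point_inverse_hoelder:
  fixes s C :: real
  assumes "0 < s" "s \<le> 1"
    and growth: "\<And>n. 1 + real n + s * (real n ^ 2 + 3 * real n + 1) \<le> real (free_weight n) + C"
    and "y \<in> {0..<1}" "y' \<in> {0..<1}"
  shows "\<bar>y - y'\<bar> \<le> 2 powr C * \<bar>coded_point y - coded_point y'\<bar> powr s"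
proof (cases "y = y'")
  case False
  obtain n where n: "1 \<le> n" "\<not> in_block n"
    and agree: "\<And>j. j < n \<Longrightarrow> dyadic_prefix y j = dyadic_prefix y' j"
    and differ: "dyadic_prefix y n \<noteq> dyadic_prefix y' n"
    using dyadic_prefix_first_difference[OF assms(4,5) False free_weight_unbounded[OF _ growth]] assms(1)
    by auto
  define D :: real where "D = \<bar>of_int (dyadic_prefix y n - dyadic_prefix y' n)\<bar>"
  have "1 \<le> \<bar>dyadic_prefix y n - dyadic_prefix y' n\<bar>" using differ by linarith
  then have "1 \<le> D" unfolding D_def by simp
  have "of_int \<bar>dyadic_prefix y n - dyadic_prefix y' n\<bar> < (of_int (2 ^ n) :: real)"
    using dyadic_prefix_diff_less[OF n agree] by (simp only: of_int_less_iff)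
  then have D_le: "D \<le> 2 powr n" unfolding D_def by (simp add: powr_realpow)
  have close: "\<bar>y - y'\<bar> \<le> (D + 1) / 2 powr free_weight n"
    using dist_le_dyadic_prefix_diff[of y y' n] unfolding D_def by (simp add: powr_realpow)
  have "(2::real) powr ((real n)^2 + 3 * real n + 1) = 2 ^ (n^2 + 3 * n + 1)"
    using powr_realpow[of 2 "n^2 + 3 * n + 1"] by (simp add: add.commute)
  then have far: "D / 2 powr ((real n)^2 + 3 * real n + 1) \<le> \<bar>coded_point y - coded_point y'\<bar>"
    using coded_point_dist_ge[OF n agree] unfolding D_def by simp
  show ?thesis
    by (rule dyadic_hoelder_estimate[OF assms(1,2) \<open>1 \<le> D\<close> D_le close far growth[of n]])
qed simp

end

section \<open>Weight of the free positions\<close>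

lemma weighted_sum_le_square_if_increments_ge:
  fixes f :: "nat \<Rightarrow> real"
  assumes "0 < \<gamma>" "\<And>i. 0 \<le> f i" "\<And>i. M \<le> i \<Longrightarrow> \<gamma> * (real i + 1) \<le> f (Suc i) - f i"
  shows "(\<Sum>i=M..<m. real i * f i) \<le> f m ^ 2 / (2 * \<gamma>)"
proof (cases "M \<le> m")
  case True
  then show ?thesis
  proof (induction m rule: dec_induct)
    case (step m)
    have "0 \<le> \<gamma> * (real m + 1)" using assms(1) by simp
    then have "f m \<le> f (Suc m)" using assms(3)[OF \<open>M \<le> m\<close>] by linarith
    have "2 * \<gamma> * (real m * f m) \<le> (\<gamma> * (real m + 1)) * (2 * f m)"
      using assms(1,2) by (simp add: algebra_simps)
    also have "\<dots> \<le> (f (Suc m) - f m) * (f (Suc m) + f m)"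
      using assms(1-3) \<open>M \<le> m\<close> \<open>f m \<le> f (Suc m)\<close> by (intro mult_mono) auto
    also have "\<dots> = f (Suc m) ^ 2 - f m ^ 2"
      by (simp add: power2_eq_square algebra_simps)
    finally have "real m * f m \<le> (f (Suc m) ^ 2 - f m ^ 2) / (2 * \<gamma>)"
      using assms(1) by (simp add: field_simps)
    then show ?case
      using step.IH step.hyps by (simp add: diff_divide_distrib)
  qed (use assms(1) in simp)
qed (use assms(1) in simp)

lemma eventually_le_imp_le_add_const:
  fixes f g :: "nat \<Rightarrow> real"
  assumes "eventually (\<lambda>n. f n \<le> g n) sequentially"
  obtains C where "\<And>n. f n \<le> g n + C"
proof -
  obtain N where N: "\<And>n. N \<le> n \<Longrightarrow> f n \<le> g n" using assms by (auto simp: eventually_sequentially)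
  have "f n \<le> g n + (\<Sum>k<N. \<bar>f k - g k\<bar>)" for n
  proof (cases "N \<le> n")
    case False
    then have "\<bar>f n - g n\<bar> \<le> (\<Sum>k<N. \<bar>f k - g k\<bar>)"
      by (intro member_le_sum) auto
    then show ?thesis by linarith
  qed (use N in \<open>auto intro: add_increasing2 sum_nonneg\<close>)
  then show ?thesis using that by blast
qed

context block_positions
begin

definition block_weight :: "nat \<Rightarrow> nat" where
  "block_weight n = (\<Sum>j=1..n. if in_block j then j else 0)"

lemma free_weight_add_block_weight: "real (free_weight n) + real (block_weight n) = real n * (real n + 1) / 2"
  by (induction n) (simp_all add: free_weight_Suc block_weight_def field_simps)

lemma block_weight_le:
  assumes "\<And>m. 1 \<le> m \<Longrightarrow> \<sigma> m \<le> n \<Longrightarrow> m \<le> M"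
  shows "block_weight n \<le> (\<Sum>m=1..M. m * (\<sigma> m + m))"
proof -
  have "block_weight n = \<Sum>{j \<in> {1..n}. in_block j}"
    unfolding block_weight_def by (rule sum.inter_filter[symmetric]) simp
  also have "\<dots> \<le> \<Sum>(\<Union>m\<in>{1..M}. {\<sigma> m..<\<sigma> m + m})"
  proof (rule sum_mono2)
    show "{j \<in> {1..n}. in_block j} \<subseteq> (\<Union>m\<in>{1..M}. {\<sigma> m..<\<sigma> m + m})"
      unfolding in_block_def using assms by force
  qed auto
  also have "\<dots> = (\<Sum>m=1..M. \<Sum>{\<sigma> m..<\<sigma> m + m})"
  proof (rule sum.UNION_disjoint)
    have "{\<sigma> i..<\<sigma> i + i} \<inter> {\<sigma> j..<\<sigma> j + j} = {}" if "1 \<le> i" "1 \<le> j" "i \<noteq> j" for i j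
      using block_unique[of i _ j] that by fastforce
    then show "\<forall>i\<in>{1..M}. \<forall>j\<in>{1..M}. i \<noteq> j \<longrightarrow> {\<sigma> i..<\<sigma> i + i} \<inter> {\<sigma> j..<\<sigma> j + j} = {}"
      by simp
  qed auto
  also have "\<dots> \<le> (\<Sum>m=1..M. m * (\<sigma> m + m))"
    by (intro sum_mono order_trans[OF sum_bounded_above[where K = "\<sigma> _ + _"]]) auto
  finally show ?thesis .
qed

lemma block_start_weights_le:
  assumes "0 < \<gamma>" "\<And>m. N \<le> m \<Longrightarrow> \<gamma> * (real m + 1) \<le> real (\<sigma> (Suc m)) - real (\<sigma> m)"
  shows "(\<Sum>i=1..<M. real i * real (\<sigma> i))
           \<le> real (\<sigma> M)^2 / (2 * \<gamma>) + (\<Sum>i=1..<N. real i * real (\<sigma> i))"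
proof -
  have "(\<Sum>i=1..<M. real i * real (\<sigma> i)) \<le> (\<Sum>i\<in>{1..<N} \<union> {N..<M}. real i * real (\<sigma> i))"
    by (intro sum_mono2) auto
  also have "\<dots> = (\<Sum>i=1..<N. real i * real (\<sigma> i)) + (\<Sum>i=N..<M. real i * real (\<sigma> i))"
    by (intro sum.union_disjoint) auto
  also have "(\<Sum>i=N..<M. real i * real (\<sigma> i)) \<le> real (\<sigma> M)^2 / (2 * \<gamma>)"
    using assms by (intro weighted_sum_le_square_if_increments_ge) auto
  finally show ?thesis by simp
qed

definition last_block :: "nat \<Rightarrow> nat" where
  "last_block n = Max (insert 0 {m \<in> {1..n}. \<sigma> m \<le> n})"

lemma last_block_ge: "1 \<le> m \<Longrightarrow> \<sigma> m \<le> n \<Longrightarrow> m \<le> last_block n"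
  unfolding last_block_def using block_start_ge[of m] by (intro Max_ge) auto

lemma last_block_start_le:
  assumes "last_block n \<noteq> 0"
  shows "1 \<le> last_block n \<and> \<sigma> (last_block n) \<le> n"
proof -
  have "last_block n \<in> insert 0 {m \<in> {1..n}. \<sigma> m \<le> n}"
    unfolding last_block_def by (intro Max_in) auto
  then show ?thesis using assms by auto
qed

lemma last_block_le_sqrt: "real (last_block n) \<le> sqrt (3 * real n)"
proof (cases "last_block n = 0")
  case False
  then have "1 \<le> last_block n" "\<sigma> (last_block n) \<le> n" using last_block_start_le by auto
  then have "last_block n * last_block n \<le> 3 * n"
    using block_start_square_le[of "last_block n"] block_start_ge[of "last_block n"] by linarith
  then have "real (last_block n) ^ 2 \<le> 3 * real n" by (simp add: power2_eq_square flip: of_nat_mult)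
  then show ?thesis by (rule real_le_rsqrt)
qed simp

lemma block_weight_le_asymptotic:
  assumes "0 < \<gamma>" "\<And>m. N \<le> m \<Longrightarrow> \<gamma> * (real m + 1) \<le> real (\<sigma> (Suc m)) - real (\<sigma> m)"
  shows "real (block_weight n) \<le> (real n)^2 / (2 * \<gamma>) + (\<Sum>i=1..<N. real i * real (\<sigma> i))
           + sqrt (3 * real n) * real n + sqrt (3 * real n) ^ 3"
proof -
  let ?K = "\<Sum>i=1..<N. real i * real (\<sigma> i)"
  let ?M = "last_block n"
  have "0 \<le> ?K" by (intro sum_nonneg) auto
  show ?thesis
  proof (cases "?M = 0")
    case True
    then have "block_weight n = 0" using block_weight_le[of n ?M, OF last_block_ge] by simp
    then show ?thesis using \<open>0 \<le> ?K\<close> \<open>0 < \<gamma>\<close> by simp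
  next
    case False
    then have M: "1 \<le> ?M" "\<sigma> ?M \<le> n" using last_block_start_le by auto
    have "real (block_weight n) \<le> real (\<Sum>m=1..?M. m * (\<sigma> m + m))"
      using block_weight_le[of n ?M, OF last_block_ge] by (simp only: of_nat_le_iff)
    also have "\<dots> = (\<Sum>m=1..<?M. real m * real (\<sigma> m)) + real ?M * real (\<sigma> ?M)
        + (\<Sum>m=1..?M. real m * real m)"
      using sum.last_plus[OF M(1), of "\<lambda>m. real m * real (\<sigma> m)"]
      by (simp add: sum.distrib distrib_left)
    also have "(\<Sum>m=1..<?M. real m * real (\<sigma> m)) \<le> (real n)^2 / (2 * \<gamma>) + ?K"
    proof -
      have "real (\<sigma> ?M)^2 / (2 * \<gamma>) \<le> (real n)^2 / (2 * \<gamma>)"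
        using M(2) \<open>0 < \<gamma>\<close> by (intro divide_right_mono power_mono) auto
      then show ?thesis using block_start_weights_le[where N = N and M = ?M, OF assms] by linarith
    qed
    also have "real ?M * real (\<sigma> ?M) \<le> sqrt (3 * real n) * real n"
      using last_block_le_sqrt M(2) by (intro mult_mono) auto
    also have "(\<Sum>m=1..?M. real m * real m) \<le> real (card {1..?M}) * (real ?M * real ?M)"
      by (intro sum_bounded_above mult_mono) auto
    also have "\<dots> = real ?M ^ 3" by (simp add: power3_eq_cube)
    also have "\<dots> \<le> sqrt (3 * real n) ^ 3"
      using last_block_le_sqrt[of n] by (intro power_mono) auto
    finally show ?thesis by simp
  qed
qed

lemma free_weight_eventually_ge:
  fixes s :: real
  assumes "0 < \<gamma>" "0 \<le> s" "s < 1/2 - 1 / (2 * \<gamma>)"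
    and "\<And>m. N \<le> m \<Longrightarrow> \<gamma> * (real m + 1) \<le> real (\<sigma> (Suc m)) - real (\<sigma> m)"
  shows "eventually (\<lambda>n. 1 + real n + s * (real n ^ 2 + 3 * real n + 1) \<le> real (free_weight n))
           sequentially"
proof -
  define \<delta> where "\<delta> = 1/2 - 1 / (2 * \<gamma>) - s"
  define K where "K = (\<Sum>i=1..<N. real i * real (\<sigma> i))"
  have "0 < \<delta>" using assms(3) by (simp add: \<delta>_def)
  then have "eventually (\<lambda>n. 1 + real n + s * (3 * real n + 1) + K + sqrt (3 * real n) * real n
      + sqrt (3 * real n) ^ 3 \<le> \<delta> * real n ^ 2 + real n / 2) sequentially"
    by real_asymp
  then show ?thesis
  proof (rule eventually_mono)
    fix n
    assume "1 + real n + s * (3 * real n + 1) + K + sqrt (3 * real n) * real n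
      + sqrt (3 * real n) ^ 3 \<le> \<delta> * real n ^ 2 + real n / 2"
    moreover have "\<delta> * real n ^ 2 + real n / 2 = real n * (real n + 1) / 2 - real n ^ 2 / (2 * \<gamma>) - s * real n ^ 2"
      by (simp add: \<delta>_def algebra_simps power2_eq_square)
    moreover have "real n * (real n + 1) / 2 = real (free_weight n) + real (block_weight n)"
      by (simp add: free_weight_add_block_weight)
    moreover have "real (block_weight n) \<le> real n ^ 2 / (2 * \<gamma>) + K + sqrt (3 * real n) * real n
        + sqrt (3 * real n) ^ 3"
      unfolding K_def by (rule block_weight_le_asymptotic[where N = N, OF assms(1,4)])
    moreover have "s * (real n ^ 2 + 3 * real n + 1) = s * real n ^ 2 + s * (3 * real n + 1)"
      by (simp add: algebra_simps)
    ultimately show "1 + real n + s * (real n ^ 2 + 3 * real n + 1) \<le> real (free_weight n)"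
      by linarith
  qed
qed

lemma hausdorff_measure_G_set_pos:
  fixes s \<gamma> :: real
  assumes "0 < s" "0 < \<gamma>" "s < 1/2 - 1 / (2 * \<gamma>)"
    and "eventually (\<lambda>m. \<gamma> * (real m + 1) \<le> real (\<sigma> (Suc m)) - real (\<sigma> m)) sequentially"
  shows "hausdorff_measure s (G_set \<sigma>) \<noteq> 0"
proof -
  obtain N where "\<And>m. N \<le> m \<Longrightarrow> \<gamma> * (real m + 1) \<le> real (\<sigma> (Suc m)) - real (\<sigma> m)"
    using assms(4) by (auto simp: eventually_sequentially)
  then have "eventually (\<lambda>n. 1 + real n + s * (real n ^ 2 + 3 * real n + 1) \<le> real (free_weight n))
      sequentially"
    using assms(1-3) by (intro free_weight_eventually_ge) auto
  then obtain C where C: "\<And>n. 1 + real n + s * (real n ^ 2 + 3 * real n + 1) \<le> real (free_weight n) + C"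
    by (rule eventually_le_imp_le_add_const[where g = "\<lambda>n. real (free_weight n)"]) blast
  have "0 < 1 / (2 * \<gamma>)" using assms(2) by simp
  then have "s \<le> 1" using assms(3) by linarith
  show ?thesis
    using coded_point_in_G_set coded_point_inverse_hoelder[OF \<open>0 < s\<close> \<open>s \<le> 1\<close> C] \<open>0 < s\<close>
    by (intro hausdorff_measure_pos_if_inverse_hoelder[of "2 powr C" s coded_point]) auto
qed

end

lemma exists_rate_below_limit:
  fixes \<beta> :: ereal and s :: real
  assumes "1 \<le> \<beta>" "0 < s"
    and "s < (if \<beta> = \<infinity> then 1 / 2 else (real_of_ereal \<beta> - 1) / (2 * real_of_ereal \<beta>))"
  obtains \<gamma> where "0 < \<gamma>" "s < 1/2 - 1 / (2 * \<gamma>)" "ereal \<gamma> < \<beta>"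
proof -
  have "s < 1/2"
  proof (cases "\<beta> = \<infinity>")
    case False
    then obtain b where b: "\<beta> = ereal b" "1 \<le> b" using assms(1) by (cases \<beta>) auto
    then have "s < (b - 1) / (2 * b)" using assms(3) False by simp
    also have "\<dots> < 1/2" using b by (simp add: field_simps)
    finally show ?thesis .
  qed (use assms(3) in simp)
  define c where "c = 1 / (1 - 2 * s)"
  have "0 < c" using \<open>s < 1/2\<close> by (simp add: c_def)
  have rate: "s < 1/2 - 1 / (2 * \<gamma>)" if "c < \<gamma>" for \<gamma>
  proof -
    have "1 / \<gamma> < 1 / c" using that \<open>0 < c\<close> by (simp add: frac_less2)
    then show ?thesis unfolding c_def by simp
  qed
  show ?thesis
  proof (cases \<beta>)
    case (real b)
    then have "c < b"
      using assms \<open>s < 1/2\<close> by (simp add: c_def field_simps)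
    then show ?thesis
      using that[of "(c + b) / 2"] rate[of "(c + b) / 2"] \<open>0 < c\<close> real by simp
  next
    case PInf
    then show ?thesis using that[of "c + 1"] rate[of "c + 1"] \<open>0 < c\<close> by simp
  qed (use assms(1) in simp)
qed

theorem proposition4p2:
  fixes \<sigma> :: "nat \<Rightarrow> nat" and \<beta> :: ereal
  assumes pos: "\<And>n. n \<ge> 1 \<Longrightarrow> 0 < \<sigma> n"
    and incr: "\<And>n. n \<ge> 1 \<Longrightarrow> \<sigma> n < \<sigma> (Suc n)"
    and gap: "\<And>n. n \<ge> 1 \<Longrightarrow> \<sigma> (Suc n) \<ge> \<sigma> n + n"
    and beta_ge: "\<beta> \<ge> 1"
    and lim: "(\<lambda>n. ereal ((real (\<sigma> n) - real (\<sigma> (n - 1))) / real n)) \<longlonglongrightarrow> \<beta>"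
  shows "hausdorff_dim (G_set \<sigma>) \<ge>
           (if \<beta> = \<infinity> then 1 / 2 else (real_of_ereal \<beta> - 1) / (2 * real_of_ereal \<beta>))"
proof -
  interpret block_positions \<sigma>
    using pos gap by unfold_locales auto
  have "hausdorff_measure s (G_set \<sigma>) \<noteq> 0"
    if s: "0 < s" "s < (if \<beta> = \<infinity> then 1 / 2 else (real_of_ereal \<beta> - 1) / (2 * real_of_ereal \<beta>))"
    for s
  proof -
    obtain \<gamma> where \<gamma>: "0 < \<gamma>" "s < 1/2 - 1 / (2 * \<gamma>)" "ereal \<gamma> < \<beta>"
      using exists_rate_below_limit[OF beta_ge s] by blast
    have "eventually (\<lambda>n. ereal \<gamma> < ereal ((real (\<sigma> n) - real (\<sigma> (n - 1))) / real n)) sequentially"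
      using lim \<gamma>(3) by (rule order_tendstoD)
    then obtain N where N: "\<And>n. N \<le> n \<Longrightarrow> \<gamma> < (real (\<sigma> n) - real (\<sigma> (n - 1))) / real n"
      by (auto simp: eventually_sequentially)
    have "\<gamma> * (real m + 1) \<le> real (\<sigma> (Suc m)) - real (\<sigma> m)" if "N \<le> m" for m
      using N[of "Suc m"] that by (simp add: field_simps)
    then show ?thesis
      by (intro hausdorff_measure_G_set_pos[OF s(1) \<gamma>(1,2)] eventually_sequentiallyI)
  qed
  moreover have "G_set \<sigma> \<subseteq> {0..1}"
    unfolding G_set_def J_set_def by auto
  ultimately show ?thesis
    by (intro hausdorff_dim_ge_if_measure_pos)
qed

end
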